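(* Let $V$ be an upper probability on $(\Omega,\mathcal{F})$ that is continuous from below, and let $\theta:\Omega\to\Omega$ be a measurable map preserving $V$ (i.e. $V(\theta^{-1}A)=V(A)$ for all $A\in\mathcal{F}$). Consider the statements: (i) $\theta$ is ergodic with respect to $V$; (ii) for every $B\in\mathcal{F}$ with $V(\theta^{-1}B\,\triangle\, B)=0$, we have $V(B)=0$ or $V(B^c)=0$; (iii) for every $A\in\mathcal{F}$ with $V(A)>0$, $V\big(\big(\bigcup_{n=1}^{\infty}\theta^{-n}A\big)^{c}\big)=0$; (iv) for all $A,B\in\mathcal{F}$ with $V(A)>0$ and $V(B)>0$ there exists $n\in\mathbb{N}$ with $V(\theta^{-n}A\cap B)>0$. Then (i) and (ii) are equivalent, (iii) implies (iv), and (iv) implies (i). Moreover, if $V$ is continuous, then (ii) implies (iii), so all four statements are equivalent.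
   Context: $\Delta(\Omega,\mathcal{F})$ denotes the set of finitely additive probabilities on $\mathcal{F}$. An upper probability is a set function $V(A)=\sup_{P\in\mathcal{P}}P(A)$, $A\in\mathcal{F}$, for some nonempty $\mathcal{P}\subseteq\Delta(\Omega,\mathcal{F})$. $V$ is continuous from below if $V(A_n)\to V(A)$ whenever $A_n\uparrow A$, and continuous if in addition $V(A_n)\to V(A)$ whenever $A_n\downarrow A$. A set $B\in\mathcal{F}$ is $\theta$-invariant if $\theta^{-1}B=B$. For a capacity $\mu$ (a monotone set function $\mathcal{F}\to[0,1]$ with $\mu(\emptyset)=0,\mu(\Omega)=1$) preserved by $\theta$, $\theta$ is ergodic with respect to $\mu$ if for every $\theta$-invariant set $B$: $\mu(B)\in\{0,1\}$, and $\mu(B)=0$ or $\mu(B^c)=0$. *)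

theory Defs
  imports "HOL-Analysis.Analysis"
begin

text \<open>The measurable space (Omega, F) is represented by a measure M: Omega = space M,
  F = sets M (the measure itself is irrelevant).\<close>

definition fa_prob :: "'a measure \<Rightarrow> ('a set \<Rightarrow> real) \<Rightarrow> bool" where
  "fa_prob M P \<longleftrightarrow>
     (\<forall>A\<in>sets M. 0 \<le> P A) \<and> P (space M) = 1 \<and>
     (\<forall>A\<in>sets M. \<forall>B\<in>sets M. A \<inter> B = {} \<longrightarrow> P (A \<union> B) = P A + P B)"

definition upper_prob :: "'a measure \<Rightarrow> ('a set \<Rightarrow> real) \<Rightarrow> bool" where
  "upper_prob M V \<longleftrightarrow>
     (\<exists>\<P>. \<P> \<noteq> {} \<and> (\<forall>P\<in>\<P>. fa_prob M P) \<and> (\<forall>A\<in>sets M. V A = (SUP P\<in>\<P>. P A)))"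

definition cont_from_below :: "'a measure \<Rightarrow> ('a set \<Rightarrow> real) \<Rightarrow> bool" where
  "cont_from_below M V \<longleftrightarrow>
     (\<forall>A. range A \<subseteq> sets M \<longrightarrow> incseq A \<longrightarrow> (\<lambda>n. V (A n)) \<longlonglongrightarrow> V (\<Union>n. A n))"

definition cont_from_above :: "'a measure \<Rightarrow> ('a set \<Rightarrow> real) \<Rightarrow> bool" where
  "cont_from_above M V \<longleftrightarrow>
     (\<forall>A. range A \<subseteq> sets M \<longrightarrow> decseq A \<longrightarrow> (\<lambda>n. V (A n)) \<longlonglongrightarrow> V (\<Inter>n. A n))"

definition continuous_sf :: "'a measure \<Rightarrow> ('a set \<Rightarrow> real) \<Rightarrow> bool" where
  "continuous_sf M V \<longleftrightarrow> cont_from_below M V \<and> cont_from_above M V"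

definition preim :: "'a measure \<Rightarrow> ('a \<Rightarrow> 'a) \<Rightarrow> 'a set \<Rightarrow> 'a set" where
  "preim M f A = f -` A \<inter> space M"

definition preserves :: "'a measure \<Rightarrow> ('a set \<Rightarrow> real) \<Rightarrow> ('a \<Rightarrow> 'a) \<Rightarrow> bool" where
  "preserves M V \<theta> \<longleftrightarrow> (\<forall>A\<in>sets M. V (preim M \<theta> A) = V A)"

definition invariant_set :: "'a measure \<Rightarrow> ('a \<Rightarrow> 'a) \<Rightarrow> 'a set \<Rightarrow> bool" where
  "invariant_set M \<theta> B \<longleftrightarrow> B \<in> sets M \<and> preim M \<theta> B = B"

definition ergodic :: "'a measure \<Rightarrow> ('a set \<Rightarrow> real) \<Rightarrow> ('a \<Rightarrow> 'a) \<Rightarrow> bool" where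
  "ergodic M \<mu> \<theta> \<longleftrightarrow>
     (\<forall>B. invariant_set M \<theta> B \<longrightarrow>
        \<mu> B \<in> {0, 1} \<and> (\<mu> B = 0 \<or> \<mu> (space M - B) = 0))"

definition cond_ii :: "'a measure \<Rightarrow> ('a set \<Rightarrow> real) \<Rightarrow> ('a \<Rightarrow> 'a) \<Rightarrow> bool" where
  "cond_ii M V \<theta> \<longleftrightarrow>
     (\<forall>B\<in>sets M. V ((preim M \<theta> B - B) \<union> (B - preim M \<theta> B)) = 0 \<longrightarrow>
        V B = 0 \<or> V (space M - B) = 0)"

definition cond_iii :: "'a measure \<Rightarrow> ('a set \<Rightarrow> real) \<Rightarrow> ('a \<Rightarrow> 'a) \<Rightarrow> bool" where
  "cond_iii M V \<theta> \<longleftrightarrow>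
     (\<forall>A\<in>sets M. V A > 0 \<longrightarrow>
        V (space M - (\<Union>n\<in>{1..}. preim M (\<theta> ^^ n) A)) = 0)"

definition cond_iv :: "'a measure \<Rightarrow> ('a set \<Rightarrow> real) \<Rightarrow> ('a \<Rightarrow> 'a) \<Rightarrow> bool" where
  "cond_iv M V \<theta> \<longleftrightarrow>
     (\<forall>A\<in>sets M. \<forall>B\<in>sets M. V A > 0 \<longrightarrow> V B > 0 \<longrightarrow>
        (\<exists>n\<ge>1. V (preim M (\<theta> ^^ n) A \<inter> B) > 0))"

end

theory Submission
  imports Defs
begin

text \<open>Upper probabilities are monotone, subadditive and normalised; continuity from below then
  makes countable unions of null sets null.  For an almost invariant set B the set of points whose
  orbit visits B infinitely often is strictly invariant and differs from B by a countable union of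
  null sets, which gives (i) \<Longrightarrow> (ii).  For (iii) \<Longrightarrow> (iv), a positive B would be covered by the null
  sets \<theta>^-n A \<inter> B and the complement of the orbit of A.  For (iv) \<Longrightarrow> (i), an invariant B and its
  complement never meet under \<theta>^-n.  Finally, with continuity from above, the tails
  \<Union>{\<theta>^-n A | n \<ge> k} all have the same upper probability because \<theta> preserves V, so their
  invariant intersection is not null, and ergodicity makes its complement null.\<close>

lemma fa_prob_empty: "fa_prob M P \<Longrightarrow> P {} = 0"
  unfolding fa_prob_def by (metis Un_empty add_cancel_left_right inf_bot_left sets.empty_sets)

lemma fa_prob_diff:
  assumes "fa_prob M P" "A \<in> sets M" "B \<in> sets M" "A \<subseteq> B"
  shows "P B = P A + P (B - A)"
proof -
  have "P (A \<union> (B - A)) = P A + P (B - A)"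
    using assms unfolding fa_prob_def by (meson Diff_disjoint sets.Diff)
  moreover have "A \<union> (B - A) = B" using assms(4) by blast
  ultimately show ?thesis by simp
qed

lemma fa_prob_mono:
  assumes "fa_prob M P" "A \<in> sets M" "B \<in> sets M" "A \<subseteq> B"
  shows "P A \<le> P B"
  using fa_prob_diff[OF assms] assms(1-3) unfolding fa_prob_def by (simp add: sets.Diff)

lemma fa_prob_le_1:
  assumes "fa_prob M P" "A \<in> sets M"
  shows "P A \<le> 1"
proof -
  have "P A \<le> P (space M)"
    using fa_prob_mono[OF assms sets.top] sets.sets_into_space[OF assms(2)] .
  then show ?thesis using assms(1) unfolding fa_prob_def by simp
qed

lemma fa_prob_subadditive:
  assumes "fa_prob M P" "A \<in> sets M" "B \<in> sets M"
  shows "P (A \<union> B) \<le> P A + P B"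
proof -
  have "P (A \<union> B) = P A + P (A \<union> B - A)"
    using fa_prob_diff[OF assms(1,2) sets.Un[OF assms(2,3)] Un_upper1] .
  moreover have "P (A \<union> B - A) \<le> P B"
    using fa_prob_mono[OF assms(1), of "A \<union> B - A" B] assms by auto
  ultimately show ?thesis by simp
qed

locale upper_probability =
  fixes M :: "'a measure" and V :: "'a set \<Rightarrow> real"
  assumes upper_prob: "upper_prob M V"
begin

lemma upper_envelope:
  obtains \<P> where "\<P> \<noteq> {}" "\<And>P. P \<in> \<P> \<Longrightarrow> fa_prob M P"
    "\<And>A. A \<in> sets M \<Longrightarrow> V A = (SUP P\<in>\<P>. P A)"
    "\<And>A. A \<in> sets M \<Longrightarrow> bdd_above ((\<lambda>P. P A) ` \<P>)"
proof -
  obtain \<P> where "\<P> \<noteq> {}" "\<forall>P\<in>\<P>. fa_prob M P" "\<forall>A\<in>sets M. V A = (SUP P\<in>\<P>. P A)"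
    using upper_prob unfolding upper_prob_def by blast
  moreover have "bdd_above ((\<lambda>P. P A) ` \<P>)" if "A \<in> sets M" for A
    using fa_prob_le_1 \<open>\<forall>P\<in>\<P>. fa_prob M P\<close> that by (intro bdd_aboveI[of _ 1]) auto
  ultimately show thesis using that by blast
qed

lemma V_empty [simp]: "V {} = 0"
proof -
  obtain \<P> where \<P>: "\<P> \<noteq> {}" "\<And>P. P \<in> \<P> \<Longrightarrow> fa_prob M P" "V {} = (SUP P\<in>\<P>. P {})"
    using upper_envelope by (metis sets.empty_sets)
  have "(SUP P\<in>\<P>. P {}) = (SUP P\<in>\<P>. (0::real))"
    using \<P>(2) by (intro SUP_cong refl) (use fa_prob_empty in blast)
  then show ?thesis using \<P>(1,3) by simp
qed

lemma V_space: "V (space M) = 1"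
proof -
  obtain \<P> where \<P>: "\<P> \<noteq> {}" "\<And>P. P \<in> \<P> \<Longrightarrow> fa_prob M P"
    "V (space M) = (SUP P\<in>\<P>. P (space M))"
    using upper_envelope by (metis sets.top)
  have "(SUP P\<in>\<P>. P (space M)) = (SUP P\<in>\<P>. (1::real))"
    using \<P>(2) by (intro SUP_cong refl) (simp add: fa_prob_def)
  then show ?thesis using \<P>(1,3) by simp
qed

lemma V_nonneg: "A \<in> sets M \<Longrightarrow> 0 \<le> V A"
proof -
  assume A: "A \<in> sets M"
  obtain \<P> where \<P>: "\<P> \<noteq> {}" "\<And>P. P \<in> \<P> \<Longrightarrow> fa_prob M P" "V A = (SUP P\<in>\<P>. P A)"
    "bdd_above ((\<lambda>P. P A) ` \<P>)"
    using upper_envelope A by metis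
  then obtain P where "P \<in> \<P>" by blast
  then have "0 \<le> P A" "P A \<le> V A"
    using \<P> A cSUP_upper[of P \<P> "\<lambda>P. P A"] unfolding fa_prob_def by auto
  then show ?thesis by linarith
qed

lemma V_mono: "A \<in> sets M \<Longrightarrow> B \<in> sets M \<Longrightarrow> A \<subseteq> B \<Longrightarrow> V A \<le> V B"
proof -
  assume AB: "A \<in> sets M" "B \<in> sets M" "A \<subseteq> B"
  obtain \<P> where \<P>: "\<P> \<noteq> {}" "\<And>P. P \<in> \<P> \<Longrightarrow> fa_prob M P"
    "\<And>A. A \<in> sets M \<Longrightarrow> V A = (SUP P\<in>\<P>. P A)" "\<And>A. A \<in> sets M \<Longrightarrow> bdd_above ((\<lambda>P. P A) ` \<P>)"
    using upper_envelope by metis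
  have "(SUP P\<in>\<P>. P A) \<le> (SUP P\<in>\<P>. P B)"
    using \<P>(1) \<P>(4)[OF AB(2)] by (rule cSUP_mono) (use \<P>(2) fa_prob_mono AB in blast)
  then show ?thesis using \<P>(3) AB by simp
qed

lemma V_subadditive: "A \<in> sets M \<Longrightarrow> B \<in> sets M \<Longrightarrow> V (A \<union> B) \<le> V A + V B"
proof -
  assume AB: "A \<in> sets M" "B \<in> sets M"
  obtain \<P> where \<P>: "\<P> \<noteq> {}" "\<And>P. P \<in> \<P> \<Longrightarrow> fa_prob M P"
    "\<And>A. A \<in> sets M \<Longrightarrow> V A = (SUP P\<in>\<P>. P A)" "\<And>A. A \<in> sets M \<Longrightarrow> bdd_above ((\<lambda>P. P A) ` \<P>)"
    using upper_envelope by metis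
  have "P (A \<union> B) \<le> V A + V B" if "P \<in> \<P>" for P
  proof -
    have "P (A \<union> B) \<le> P A + P B" using fa_prob_subadditive \<P>(2) that AB by blast
    also have "\<dots> \<le> V A + V B"
      using \<P>(3,4) AB that by (intro add_mono) (auto intro: cSUP_upper)
    finally show ?thesis .
  qed
  then show ?thesis using \<P>(1,3) AB by (auto intro!: cSUP_least)
qed

lemma V_le_1: "A \<in> sets M \<Longrightarrow> V A \<le> 1"
  using V_mono[of A "space M"] V_space sets.sets_into_space by auto

lemma V_null_subset: "A \<in> sets M \<Longrightarrow> N \<in> sets M \<Longrightarrow> A \<subseteq> N \<Longrightarrow> V N = 0 \<Longrightarrow> V A = 0"
  using V_mono V_nonneg by (metis order_antisym)

lemma V_le_of_subset_null:
  assumes "A \<in> sets M" "B \<in> sets M" "N \<in> sets M" "A \<subseteq> B \<union> N" "V N = 0"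
  shows "V A \<le> V B"
  using V_mono[of A "B \<union> N"] V_subadditive[of B N] assms by auto

lemma V_eq_of_null_sym_diff:
  assumes "A \<in> sets M" "B \<in> sets M" "V (sym_diff A B) = 0"
  shows "V A = V B"
proof -
  have "sym_diff B A = sym_diff A B" by blast
  then show ?thesis
    using V_le_of_subset_null[of A B "sym_diff A B"] V_le_of_subset_null[of B A "sym_diff A B"]
      assms by (auto intro: order_antisym)
qed

lemma V_0_1_if_null_or_conull:
  assumes "B \<in> sets M" "V B = 0 \<or> V (space M - B) = 0"
  shows "V B \<in> {0, 1}"
proof (cases "V B = 0")
  case False
  then have "V (space M - B) = 0" using assms(2) by simp
  then have "V (space M) \<le> V B"
    using V_le_of_subset_null[of "space M" B "space M - B"] assms(1) by auto
  then show ?thesis using V_space V_le_1[OF assms(1)] by simp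
qed simp

lemma V_null_UN:
  fixes N :: "nat \<Rightarrow> 'a set"
  assumes "cont_from_below M V" "range N \<subseteq> sets M" "\<And>n. V (N n) = 0"
  shows "V (\<Union>n. N n) = 0"
proof -
  define S where "S n = (\<Union>i<n. N i)" for n
  have S_sets: "S n \<in> sets M" for n using assms(2) unfolding S_def by auto
  have S_null: "V (S n) = 0" for n
  proof (induction n)
    case (Suc n)
    have "V (S (Suc n)) \<le> V (S n)"
      using V_le_of_subset_null[of "S (Suc n)" "S n" "N n"] S_sets assms(2,3)
      by (auto simp: S_def lessThan_Suc)
    then show ?case using Suc V_nonneg[OF S_sets] by (simp add: order_antisym)
  qed (simp add: S_def)
  have "incseq S" unfolding S_def incseq_def by (meson UN_mono lessThan_subset_iff order_refl)
  then have "(\<lambda>n. V (S n)) \<longlonglongrightarrow> V (\<Union>n. S n)"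
    using assms(1) S_sets unfolding cont_from_below_def by blast
  moreover have "(\<Union>n. S n) = (\<Union>n. N n)" unfolding S_def by blast
  ultimately have "(\<lambda>n. 0) \<longlonglongrightarrow> V (\<Union>n. N n)" using S_null by simp
  then show ?thesis by (metis LIMSEQ_const_iff)
qed

end

lemma measurable_funpow: "f \<in> M \<rightarrow>\<^sub>M M \<Longrightarrow> f ^^ n \<in> M \<rightarrow>\<^sub>M M"
  by (induction n) (auto intro: measurable_comp)

lemma preim_in_sets: "f \<in> M \<rightarrow>\<^sub>M M \<Longrightarrow> A \<in> sets M \<Longrightarrow> preim M f A \<in> sets M"
  unfolding preim_def by (rule measurable_sets)

lemma preim_funpow_in_sets: "f \<in> M \<rightarrow>\<^sub>M M \<Longrightarrow> A \<in> sets M \<Longrightarrow> preim M (f ^^ n) A \<in> sets M"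
  by (rule preim_in_sets[OF measurable_funpow])

lemma preim_ident: "A \<in> sets M \<Longrightarrow> preim M (\<lambda>x. x) A = A"
  using sets.sets_into_space unfolding preim_def by auto

lemma preim_sym_diff: "preim M f (sym_diff A B) = sym_diff (preim M f A) (preim M f B)"
  unfolding preim_def by blast

lemma preim_funpow_Suc:
  assumes "f \<in> M \<rightarrow>\<^sub>M M"
  shows "preim M (f ^^ Suc n) A = preim M (f ^^ n) (preim M f A)"
  using measurable_space[OF measurable_funpow[OF assms]] unfolding preim_def by auto

lemma preserves_funpow:
  assumes "f \<in> M \<rightarrow>\<^sub>M M" "preserves M V f"
  shows "preserves M V (f ^^ n)"
proof (induction n)
  case (Suc n)
  have "V (preim M (f ^^ Suc n) A) = V A" if "A \<in> sets M" for A
    using Suc assms(2) preim_in_sets[OF assms(1) that] that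
    unfolding preim_funpow_Suc[OF assms(1)] preserves_def by simp
  then show ?case unfolding preserves_def by blast
qed (simp add: preserves_def preim_ident)

lemma invariant_set_funpow:
  assumes "f \<in> M \<rightarrow>\<^sub>M M" "invariant_set M f B"
  shows "invariant_set M (f ^^ n) B"
  unfolding invariant_set_def
proof (induction n)
  case (Suc n)
  then show ?case
    using assms(2) unfolding preim_funpow_Suc[OF assms(1)] invariant_set_def by simp
qed (use assms in \<open>simp add: invariant_set_def preim_ident\<close>)

lemma frequently_sequentially_Suc:
  "frequently (\<lambda>n. P (Suc n)) sequentially \<longleftrightarrow> frequently P sequentially"
  unfolding frequently_def using eventually_sequentially_Suc[of "\<lambda>n. \<not> P n"] by simp

lemma limsup_preim_funpow_invariant:
  assumes "f \<in> M \<rightarrow>\<^sub>M M" "A \<in> sets M"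
  shows "invariant_set M f (limsup (\<lambda>n. preim M (f ^^ n) A))"
proof -
  let ?L = "limsup (\<lambda>n. preim M (f ^^ n) A)"
  have "preim M f ?L = ?L"
  proof (intro set_eqI)
    fix x
    have "x \<in> preim M f ?L \<longleftrightarrow> x \<in> space M \<and> frequently (\<lambda>n. (f ^^ Suc n) x \<in> A) sequentially"
      using measurable_space[OF assms(1)]
      by (auto simp: preim_def mem_limsup_iff funpow_swap1)
    also have "\<dots> \<longleftrightarrow> x \<in> space M \<and> frequently (\<lambda>n. (f ^^ n) x \<in> A) sequentially"
      using frequently_sequentially_Suc[of "\<lambda>n. (f ^^ n) x \<in> A"] by simp
    also have "\<dots> \<longleftrightarrow> x \<in> ?L"
      by (auto simp: preim_def mem_limsup_iff)
    finally show "x \<in> preim M f ?L \<longleftrightarrow> x \<in> ?L" .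
  qed
  then show ?thesis
    unfolding invariant_set_def using assms by (auto intro!: measurable_limsup preim_funpow_in_sets)
qed

lemma preim_funpow_tail:
  assumes "f \<in> M \<rightarrow>\<^sub>M M"
  shows "preim M (f ^^ k) (\<Union>n\<in>{m..}. preim M (f ^^ n) A) = (\<Union>n\<in>{k + m..}. preim M (f ^^ n) A)"
proof -
  have "preim M (f ^^ k) (\<Union>n\<in>{m..}. preim M (f ^^ n) A) = (\<Union>n\<in>{m..}. preim M (f ^^ (k + n)) A)"
    using measurable_space[OF measurable_funpow[OF assms], of _ k]
    unfolding preim_def by (auto simp: funpow_add add.commute[of k])
  also have "\<dots> = (\<Union>n\<in>{k + m..}. preim M (f ^^ n) A)"
    unfolding image_add_atLeast[symmetric] image_image ..
  finally show ?thesis .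
qed

context upper_probability
begin

lemma V_sym_diff_preim_funpow_null:
  assumes "\<theta> \<in> M \<rightarrow>\<^sub>M M" "preserves M V \<theta>" "B \<in> sets M"
    and "V (sym_diff (preim M \<theta> B) B) = 0"
  shows "V (sym_diff (preim M (\<theta> ^^ n) B) B) = 0"
proof (induction n)
  case (Suc n)
  let ?D = "sym_diff (preim M \<theta> B) B"
  let ?E = "\<lambda>n. sym_diff (preim M (\<theta> ^^ n) B) B"
  have E_sets: "?E n \<in> sets M" for n
    using preim_funpow_in_sets[OF assms(1,3)] assms(3) by (intro sets.Un sets.Diff)
  have D_sets: "?D \<in> sets M"
    using preim_in_sets[OF assms(1,3)] assms(3) by (intro sets.Un sets.Diff)
  have "preim M (\<theta> ^^ n) ?D = sym_diff (preim M (\<theta> ^^ Suc n) B) (preim M (\<theta> ^^ n) B)"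
    unfolding preim_funpow_Suc[OF assms(1)] preim_sym_diff ..
  then have "?E (Suc n) \<subseteq> ?E n \<union> preim M (\<theta> ^^ n) ?D" by blast
  moreover have "V (preim M (\<theta> ^^ n) ?D) = 0"
    using preserves_funpow[OF assms(1,2)] D_sets assms(4) unfolding preserves_def by simp
  ultimately have "V (?E (Suc n)) \<le> V (?E n)"
    by (rule V_le_of_subset_null[OF E_sets E_sets preim_funpow_in_sets[OF assms(1) D_sets]])
  then show ?case using Suc V_nonneg[OF E_sets, of "Suc n"] by linarith
qed (simp add: preim_ident assms(3))

lemma null_sym_diff_limsup_preim:
  assumes "cont_from_below M V" "\<theta> \<in> M \<rightarrow>\<^sub>M M" "preserves M V \<theta>" "B \<in> sets M"
    and "V (sym_diff (preim M \<theta> B) B) = 0"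
  shows "V (sym_diff (limsup (\<lambda>n. preim M (\<theta> ^^ n) B)) B) = 0"
proof -
  let ?E = "\<lambda>n. sym_diff (preim M (\<theta> ^^ n) B) B"
  have E_sets: "range ?E \<subseteq> sets M"
    using preim_funpow_in_sets[OF assms(2,4)] assms(4) by (auto intro!: sets.Un sets.Diff)
  have L_sets: "limsup (\<lambda>n. preim M (\<theta> ^^ n) B) \<in> sets M"
    using preim_funpow_in_sets[OF assms(2,4)] by (rule measurable_limsup)
  have "sym_diff (limsup (\<lambda>n. preim M (\<theta> ^^ n) B)) B \<subseteq> (\<Union>n. ?E n)"
    using sets.sets_into_space[OF assms(4)]
    by (auto simp: mem_limsup_iff frequently_sequentially preim_def) (meson le_refl)+
  moreover have "V (\<Union>n. ?E n) = 0"
    using V_null_UN[OF assms(1) E_sets] V_sym_diff_preim_funpow_null[OF assms(2-5)] by blast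
  ultimately show ?thesis
    using V_null_subset[OF _ sets.countable_UN[OF E_sets]] L_sets assms(4) by (auto intro!: sets.Un sets.Diff)
qed

lemma ergodic_imp_cond_ii:
  assumes "cont_from_below M V" "\<theta> \<in> M \<rightarrow>\<^sub>M M" "preserves M V \<theta>" "ergodic M V \<theta>"
  shows "cond_ii M V \<theta>"
  unfolding cond_ii_def
proof (intro ballI impI)
  fix B assume B: "B \<in> sets M" and almost_inv: "V (sym_diff (preim M \<theta> B) B) = 0"
  define L where "L = limsup (\<lambda>n. preim M (\<theta> ^^ n) B)"
  have L_inv: "invariant_set M \<theta> L"
    unfolding L_def using limsup_preim_funpow_invariant[OF assms(2) B] .
  then have L_sets: "L \<in> sets M" unfolding invariant_set_def by blast
  have null: "V (sym_diff L B) = 0"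
    unfolding L_def using null_sym_diff_limsup_preim[OF assms(1-3) B almost_inv] .
  have "V L = V B" using V_eq_of_null_sym_diff[OF L_sets B null] .
  moreover have "V (space M - L) = V (space M - B)"
  proof (rule V_eq_of_null_sym_diff)
    show "V (sym_diff (space M - L) (space M - B)) = 0"
      by (rule V_null_subset[OF _ _ _ null]) (use L_sets B in \<open>auto intro!: sets.Un sets.Diff\<close>)
  qed (use L_sets B in auto)
  moreover have "V L = 0 \<or> V (space M - L) = 0"
    using assms(4) L_inv unfolding ergodic_def by blast
  ultimately show "V B = 0 \<or> V (space M - B) = 0" by simp
qed

lemma cond_ii_imp_ergodic:
  assumes "cond_ii M V \<theta>"
  shows "ergodic M V \<theta>"
  unfolding ergodic_def
proof (intro allI impI)
  fix B assume "invariant_set M \<theta> B"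
  then have "B \<in> sets M" "preim M \<theta> B = B" unfolding invariant_set_def by auto
  then have "V B = 0 \<or> V (space M - B) = 0" using assms unfolding cond_ii_def by simp
  then show "V B \<in> {0, 1} \<and> (V B = 0 \<or> V (space M - B) = 0)"
    using V_0_1_if_null_or_conull \<open>B \<in> sets M\<close> by blast
qed

lemma cond_iii_imp_cond_iv:
  assumes "cont_from_below M V" "\<theta> \<in> M \<rightarrow>\<^sub>M M" "cond_iii M V \<theta>"
  shows "cond_iv M V \<theta>"
  unfolding cond_iv_def
proof (intro ballI impI)
  fix A B assume A: "A \<in> sets M" "V A > 0" and B: "B \<in> sets M" "V B > 0"
  show "\<exists>n\<ge>1. V (preim M (\<theta> ^^ n) A \<inter> B) > 0"
  proof (rule ccontr)
    assume none: "\<not> (\<exists>n\<ge>1. V (preim M (\<theta> ^^ n) A \<inter> B) > 0)"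
    let ?N = "\<lambda>n. preim M (\<theta> ^^ Suc n) A \<inter> B"
    let ?U = "\<Union>n\<in>{1..}. preim M (\<theta> ^^ n) A"
    have N_sets: "range ?N \<subseteq> sets M"
      by (intro image_subsetI sets.Int preim_funpow_in_sets[OF assms(2) A(1)] B(1))
    have "V (?N n) = 0" for n
    proof -
      have "\<not> V (?N n) > 0" using none by (metis Suc_le_mono le0 One_nat_def)
      then show ?thesis using V_nonneg[of "?N n"] N_sets by force
    qed
    then have N_null: "V (\<Union>n. ?N n) = 0" using V_null_UN[OF assms(1) N_sets] by blast
    have U_sets: "?U \<in> sets M" using preim_funpow_in_sets[OF assms(2) A(1)] by auto
    have "B \<subseteq> (\<Union>n. ?N n) \<union> (space M - ?U)"
      using sets.sets_into_space[OF B(1)] by (auto simp: atLeast_Suc_greaterThan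
        greaterThan_0 elim!: ballE[of _ _ 0])
    then have "V B \<le> V (\<Union>n. ?N n)"
      using V_le_of_subset_null assms(3) A B(1) N_sets U_sets unfolding cond_iii_def
      by (metis sets.compl_sets sets.countable_UN)
    then show False using N_null B(2) by simp
  qed
qed

lemma cond_iv_imp_ergodic:
  assumes "\<theta> \<in> M \<rightarrow>\<^sub>M M" "cond_iv M V \<theta>"
  shows "ergodic M V \<theta>"
  unfolding ergodic_def
proof (intro allI impI)
  fix B assume inv: "invariant_set M \<theta> B"
  then have B: "B \<in> sets M" "space M - B \<in> sets M" unfolding invariant_set_def by auto
  have "preim M (\<theta> ^^ n) B \<inter> (space M - B) = {}" for n
    using invariant_set_funpow[OF assms(1) inv] unfolding invariant_set_def by blast
  then have "\<not> (V B > 0 \<and> V (space M - B) > 0)"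
    using assms(2) B unfolding cond_iv_def by (metis V_empty less_irrefl)
  then have "V B = 0 \<or> V (space M - B) = 0" using V_nonneg[OF B(1)] V_nonneg[OF B(2)] by linarith
  then show "V B \<in> {0, 1} \<and> (V B = 0 \<or> V (space M - B) = 0)"
    using V_0_1_if_null_or_conull B by blast
qed

lemma ergodic_imp_cond_iii:
  assumes "cont_from_above M V" "\<theta> \<in> M \<rightarrow>\<^sub>M M" "preserves M V \<theta>" "ergodic M V \<theta>"
  shows "cond_iii M V \<theta>"
  unfolding cond_iii_def
proof (intro ballI impI)
  fix A assume A: "A \<in> sets M" "V A > 0"
  define T where "T k = (\<Union>n\<in>{k..}. preim M (\<theta> ^^ n) A)" for k
  define L where "L = limsup (\<lambda>n. preim M (\<theta> ^^ n) A)"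
  have T_sets: "T k \<in> sets M" for k
    unfolding T_def using preim_funpow_in_sets[OF assms(2) A(1)] by auto
  have L_inv: "invariant_set M \<theta> L"
    unfolding L_def using limsup_preim_funpow_invariant[OF assms(2) A(1)] .
  then have L_sets: "L \<in> sets M" unfolding invariant_set_def by blast
  have T_const: "V (T k) = V (T 0)" for k
  proof -
    have "T k = preim M (\<theta> ^^ k) (T 0)"
      using preim_funpow_tail[OF assms(2), where k=k and m=0 and A=A] unfolding T_def by simp
    then show ?thesis using preserves_funpow[OF assms(2,3), of k] T_sets unfolding preserves_def by simp
  qed
  have "decseq T" unfolding T_def decseq_def by (meson UN_mono atLeast_subset_iff order_refl)
  then have "(\<lambda>k. V (T k)) \<longlonglongrightarrow> V (\<Inter>k. T k)"
    using assms(1) T_sets unfolding cont_from_above_def by blast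
  moreover have "(\<Inter>k. T k) = L" unfolding T_def L_def limsup_INF_SUP ..
  moreover have "(\<lambda>k. V (T k)) = (\<lambda>k. V (T 0))" by (intro ext T_const)
  ultimately have "(\<lambda>k. V (T 0)) \<longlonglongrightarrow> V L" by simp
  then have "V L = V (T 0)" by (simp add: LIMSEQ_const_iff)
  moreover have "A \<subseteq> T 0"
    using UN_upper[of 0 "{0..}" "\<lambda>n. preim M (\<theta> ^^ n) A"] preim_ident[OF A(1)]
    unfolding T_def by (simp add: id_def)
  then have "V A \<le> V (T 0)" by (rule V_mono[OF A(1) T_sets])
  ultimately have "V L \<noteq> 0" using A(2) by linarith
  then have "V (space M - L) = 0" using assms(4) L_inv unfolding ergodic_def by blast
  moreover have "space M - T 1 \<subseteq> space M - L"
    unfolding L_def limsup_INF_SUP T_def by blast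
  ultimately have "V (space M - T 1) = 0"
    using V_null_subset[OF sets.Diff[OF sets.top T_sets] sets.Diff[OF sets.top L_sets]] by blast
  then show "V (space M - (\<Union>n\<in>{1..}. preim M (\<theta> ^^ n) A)) = 0" unfolding T_def .
qed

end

theorem theorem4:
  fixes M :: "'a measure" and V :: "'a set \<Rightarrow> real" and \<theta> :: "'a \<Rightarrow> 'a"
  assumes "upper_prob M V"
    and "cont_from_below M V"
    and "\<theta> \<in> M \<rightarrow>\<^sub>M M"
    and "preserves M V \<theta>"
  shows "(ergodic M V \<theta> \<longleftrightarrow> cond_ii M V \<theta>)
     \<and> (cond_iii M V \<theta> \<longrightarrow> cond_iv M V \<theta>)
     \<and> (cond_iv M V \<theta> \<longrightarrow> ergodic M V \<theta>)
     \<and> (continuous_sf M V \<longrightarrow> cond_ii M V \<theta> \<longrightarrow> cond_iii M V \<theta>)"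
proof -
  interpret upper_probability M V by unfold_locales (rule assms(1))
  have "cond_ii M V \<theta> \<Longrightarrow> cont_from_above M V \<Longrightarrow> cond_iii M V \<theta>"
    using ergodic_imp_cond_iii assms(3,4) cond_ii_imp_ergodic by blast
  then show ?thesis
    using ergodic_imp_cond_ii[OF assms(2-4)] cond_ii_imp_ergodic
      cond_iii_imp_cond_iv[OF assms(2,3)] cond_iv_imp_ergodic[OF assms(3)]
    unfolding continuous_sf_def by blast
qed

end
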